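(* Fix an integer $r\ge1$, let $\mathrm{J}=e^{2\pi\mathrm{I}/r}$ with $\mathrm{I}^2=-1$, and consider the curve $x=-y^r+\log y$, i.e. $e^x=ye^{-y^r}$, near $y=0$. For $i\in\{0,\dots,r-1\}$ define $$\xi_i=\frac{\mathrm{I}\sqrt2\,r^{-\frac12-\frac1r}\mathrm{J}^i}{r^{-1/r}\mathrm{J}^i-y},$$ and for $a\in\{0,\dots,r-1\}$ define $\tilde\xi_a=\sum_{i=0}^{r-1}r^{-1}\mathrm{J}^{-(a+1)i}\xi_i$. Then, as functions of $x$ expanded near $y=0$, $$\tilde\xi_a=\mathrm{I}\sqrt2\,r^{\frac12-\frac{a+1}r}\sum_{n=0}^\infty\frac{(rn+r-a-1)^n}{n!}e^{(rn+r-a-1)x}.$$ *)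

theory Defs
  imports "HOL-Analysis.Analysis"
begin

definition J :: "nat \<Rightarrow> complex" where
  "J r = exp (2 * of_real pi * \<i> / of_nat r)"

definition xi :: "nat \<Rightarrow> nat \<Rightarrow> complex \<Rightarrow> complex" where
  "xi r i y = \<i> * of_real (sqrt 2) * of_real (real r powr (-1/2 - 1/real r)) * J r ^ i
      / (of_real (real r powr (-1/real r)) * J r ^ i - y)"

definition xit :: "nat \<Rightarrow> nat \<Rightarrow> complex \<Rightarrow> complex" where
  "xit r a y = (\<Sum>i<r. (1 / of_nat r) * J r powi (- (int (a+1) * int i)) * xi r i y)"

end

(*
  Put v = y^r and m = r - a - 1. Since exp x = y exp (-v), the n-th term of the series is
  i sqrt 2 r^(1/2 - (a+1)/r) y^m times (r n + m)^n / n! v^n exp (-(r n + m) v), and these terms sum to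
  1 / (1 - r v) by the Lagrange inversion identity
    sum_n (alpha n + beta)^n / n! v^n exp (-(alpha n + beta) v) = 1 / (1 - alpha v)   (v small).
  To prove the identity, expand each exponential: the resulting double series converges absolutely,
  and its N-th antidiagonal sums to (alpha v)^N because the N-th finite difference of the
  polynomial (alpha n + beta)^N is N! alpha^N.

  On the other side, the poles rho J^i (rho = r^(-1/r)) of the xi_i are the r-th roots of 1/r.
  Expanding each 1/(rho J^i - y) as a finite geometric sum in y/(rho J^i), the root-of-unity average
  defining the tilde-xi_a keeps only the power y^m, so tilde-xi_a = i sqrt 2 r^(1/2 - (a+1)/r) y^m / (1 - r v).
*)

theory Submission
  imports Defs
begin

lemma sum_alternating_binomial_power:
  assumes "j \<le> N"
  shows "(\<Sum>n\<le>N. (-1) ^ n * of_nat (N choose n) * of_nat n ^ j :: 'a::{comm_ring_1,ring_char_0})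
         = (if j = N then (-1) ^ N * fact N else 0)"
  using assms
proof (induction N arbitrary: j)
  case 0
  then show ?case by simp
next
  case (Suc N)
  show ?case
  proof (cases j)
    case 0
    then show ?thesis
      using choose_alternating_sum[of "Suc N", where 'a='a] by simp
  next
    case (Suc i)
    have "i \<le> N" using Suc.prems Suc by simp
    have "(\<Sum>n\<le>Suc N. (-1) ^ n * of_nat (Suc N choose n) * of_nat n ^ j :: 'a)
        = (\<Sum>k\<le>N. (-1) ^ Suc k * of_nat (Suc k * (Suc N choose Suc k)) * of_nat (Suc k) ^ i)"
      by (subst sum.atMost_Suc_shift) (simp add: Suc algebra_simps)
    also have "\<dots> = - of_nat (Suc N) * (\<Sum>k\<le>N. (-1) ^ k * of_nat (N choose k) * (of_nat k + 1) ^ i)"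
      by (simp only: Suc_times_binomial of_nat_mult) (simp add: sum_distrib_left algebra_simps)
    also have "(\<Sum>k\<le>N. (-1) ^ k * of_nat (N choose k) * (of_nat k + 1) ^ i :: 'a)
        = (\<Sum>k\<le>N. \<Sum>l\<le>i. of_nat (i choose l) * ((-1) ^ k * of_nat (N choose k) * of_nat k ^ l))"
      by (intro sum.cong refl) (simp add: binomial_ring sum_distrib_left mult_ac)
    also have "\<dots> = (\<Sum>l\<le>i. of_nat (i choose l) * (\<Sum>k\<le>N. (-1) ^ k * of_nat (N choose k) * of_nat k ^ l))"
      by (subst sum.swap) (simp add: sum_distrib_left)
    also have "\<dots> = (\<Sum>l\<le>i. if l = N then of_nat (i choose l) * ((-1) ^ N * fact N) else 0)"
      using \<open>i \<le> N\<close> Suc.IH by (intro sum.cong) auto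
    also have "\<dots> = (if i = N then (-1) ^ N * fact N else 0)"
      using \<open>i \<le> N\<close> by (auto simp: sum.delta)
    finally show ?thesis using Suc \<open>i \<le> N\<close> by (auto simp: algebra_simps)
  qed
qed

lemma sum_alternating_binomial_linear_power:
  fixes \<alpha> \<beta> :: "'a::{comm_ring_1,ring_char_0}"
  shows "(\<Sum>n\<le>N. (-1) ^ n * of_nat (N choose n) * (\<alpha> * of_nat n + \<beta>) ^ N) = (-1) ^ N * fact N * \<alpha> ^ N"
proof -
  define c where "c j = of_nat (N choose j) * \<alpha> ^ j * \<beta> ^ (N - j)" for j
  have "(\<alpha> * of_nat n + \<beta>) ^ N = (\<Sum>j\<le>N. c j * of_nat n ^ j)" for n
    unfolding binomial_ring c_def by (simp add: power_mult_distrib mult_ac)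
  then have "(\<Sum>n\<le>N. (-1) ^ n * of_nat (N choose n) * (\<alpha> * of_nat n + \<beta>) ^ N)
      = (\<Sum>n\<le>N. \<Sum>j\<le>N. c j * ((-1) ^ n * of_nat (N choose n) * of_nat n ^ j))"
    by (simp only: sum_distrib_left mult_ac)
  also have "\<dots> = (\<Sum>j\<le>N. c j * (\<Sum>n\<le>N. (-1) ^ n * of_nat (N choose n) * of_nat n ^ j))"
    by (subst sum.swap) (simp only: sum_distrib_left)
  also have "\<dots> = (\<Sum>j\<le>N. if j = N then c N * ((-1) ^ N * fact N) else 0)"
    by (intro sum.cong refl) (simp add: sum_alternating_binomial_power)
  finally show ?thesis
    by (simp add: c_def)
qed

definition lagrange_double_term :: "'a::field_char_0 \<Rightarrow> 'a \<Rightarrow> 'a \<Rightarrow> nat \<Rightarrow> nat \<Rightarrow> 'a" where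
  "lagrange_double_term \<alpha> \<beta> v n k =
     (\<alpha> * of_nat n + \<beta>) ^ n / fact n * v ^ n * (- (\<alpha> * of_nat n + \<beta>) * v) ^ k / fact k"

lemma sum_lagrange_double_term_antidiagonal:
  fixes \<alpha> \<beta> v :: "'a::field_char_0"
  shows "(\<Sum>n\<le>N. lagrange_double_term \<alpha> \<beta> v n (N - n)) = (\<alpha> * v) ^ N"
proof -
  have "lagrange_double_term \<alpha> \<beta> v n (N - n)
      = (-1) ^ N * v ^ N / fact N * ((-1) ^ n * of_nat (N choose n) * (\<alpha> * of_nat n + \<beta>) ^ N)"
    if "n \<le> N" for n
  proof -
    have "(-1 :: 'a) ^ (N - n) = (-1) ^ (N - n + 2 * n)"
      by (simp add: power_add power_mult)
    also have "\<dots> = (-1) ^ N * (-1) ^ n"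
      using that by (simp add: add.commute flip: power_add)
    finally have "(-1 :: 'a) ^ (N - n) = (-1) ^ N * (-1) ^ n" .
    define x where "x = \<alpha> * of_nat n + \<beta>"
    have "lagrange_double_term \<alpha> \<beta> v n (N - n)
        = x ^ n * x ^ (N - n) * (v ^ n * v ^ (N - n)) * (-1) ^ (N - n) / (fact n * fact (N - n))"
      unfolding lagrange_double_term_def x_def[symmetric]
      by (simp add: power_mult_distrib power_minus' mult_ac)
    also have "\<dots> = x ^ N * v ^ N * ((-1) ^ N * (-1) ^ n) / (fact n * fact (N - n))"
      using that by (simp add: \<open>(-1 :: 'a) ^ (N - n) = (-1) ^ N * (-1) ^ n\<close> flip: power_add)
    also have "\<dots> = (-1) ^ N * v ^ N / fact N * ((-1) ^ n * of_nat (N choose n) * x ^ N)"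
      by (simp add: binomial_fact[OF that] field_simps)
    finally show ?thesis by (simp add: x_def)
  qed
  then have "(\<Sum>n\<le>N. lagrange_double_term \<alpha> \<beta> v n (N - n))
      = (-1) ^ N * v ^ N / fact N * (\<Sum>n\<le>N. (-1) ^ n * of_nat (N choose n) * (\<alpha> * of_nat n + \<beta>) ^ N)"
    by (simp add: sum_distrib_left)
  also have "\<dots> = (\<alpha> * v) ^ N"
    by (simp add: sum_alternating_binomial_linear_power power_mult_distrib flip: power_add mult_2)
  finally show ?thesis .
qed

lemma exp_series_sums: "(\<lambda>k. z ^ k / fact k) sums exp (z :: 'a::{real_normed_field,banach})"
  using exp_converges[of z] by (simp add: scaleR_conv_of_real divide_inverse mult.commute)

lemma power_div_fact_le_exp:
  fixes x :: real
  assumes "x \<ge> 0"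
  shows "x ^ n / fact n \<le> exp x"
  using sum_le_suminf[OF sums_summable[OF exp_series_sums[of x]], of "{n}"] assms
  by (simp add: sums_unique[OF exp_series_sums, symmetric])

lemma lagrange_double_term_row_has_sum:
  fixes \<alpha> \<beta> v :: complex
  shows "((\<lambda>k. lagrange_double_term \<alpha> \<beta> v n k) has_sum
           ((\<alpha> * of_nat n + \<beta>) ^ n / fact n * v ^ n * exp (- (\<alpha> * of_nat n + \<beta>) * v))) UNIV"
proof (rule norm_summable_imp_has_sum)
  define c where "c = (\<alpha> * of_nat n + \<beta>) ^ n / fact n * v ^ n"
  define z where "z = - (\<alpha> * of_nat n + \<beta>) * v"
  have row_term: "lagrange_double_term \<alpha> \<beta> v n k = c * (z ^ k / fact k)" for k
    by (simp add: lagrange_double_term_def c_def z_def)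
  show "(\<lambda>k. lagrange_double_term \<alpha> \<beta> v n k) sums (c * exp z)"
    unfolding row_term by (rule sums_mult[OF exp_series_sums])
  show "summable (\<lambda>k. norm (lagrange_double_term \<alpha> \<beta> v n k))"
    unfolding row_term norm_mult
    by (rule summable_mult) (use sums_summable[OF exp_series_sums[of "norm z"]] in \<open>simp add: norm_divide norm_power\<close>)
qed

lemma norm_lagrange_double_term_le:
  fixes \<alpha> \<beta> v :: complex and n k :: nat
  defines "c \<equiv> norm \<alpha> * real n + norm \<beta>"
  shows "norm (lagrange_double_term \<alpha> \<beta> v n k) \<le> c ^ n / fact n * norm v ^ n * ((c * norm v) ^ k / fact k)"
proof -
  have "norm (\<alpha> * of_nat n + \<beta>) \<le> c"
    unfolding c_def using norm_triangle_ineq[of "\<alpha> * of_nat n" \<beta>] by (simp add: norm_mult)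
  moreover have "norm (lagrange_double_term \<alpha> \<beta> v n k)
      = norm (\<alpha> * of_nat n + \<beta>) ^ n / fact n * norm v ^ n * ((norm (\<alpha> * of_nat n + \<beta>) * norm v) ^ k / fact k)"
    unfolding lagrange_double_term_def norm_mult norm_divide norm_power norm_minus_cancel by simp
  moreover have "c \<ge> 0"
    by (simp add: c_def)
  ultimately show ?thesis
    by (auto intro!: mult_mono divide_right_mono power_mono mult_right_mono)
qed

lemma lagrange_double_term_summable_on:
  fixes \<alpha> \<beta> v :: complex
  assumes "norm v * exp (norm \<alpha> * (1 + norm v)) < 1"
  shows "case_prod (lagrange_double_term \<alpha> \<beta> v) summable_on UNIV"
proof -
  define s where "s = norm v"
  define c where "c n = norm \<alpha> * real n + norm \<beta>" for n
  define g where "g = (\<lambda>(n, k). c n ^ n / fact n * s ^ n * ((c n * s) ^ k / fact k))"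
  define G where "G n = c n ^ n / fact n * s ^ n * exp (c n * s)" for n
  have c_nonneg: "c n \<ge> 0" for n
    by (simp add: c_def)
  have s_nonneg: "s \<ge> 0"
    by (simp add: s_def)
  have norm_le: "norm (lagrange_double_term \<alpha> \<beta> v n k) \<le> g (n, k)" for n k
    unfolding g_def c_def s_def prod.case by (rule norm_lagrange_double_term_le)
  have g_row: "((\<lambda>k. g (n, k)) has_sum G n) UNIV" for n
    unfolding g_def G_def prod.case
    by (intro sums_nonneg_imp_has_sum sums_mult exp_series_sums)
       (use c_nonneg s_nonneg in simp)
  have G_nonneg: "G n \<ge> 0" for n
    by (simp add: G_def c_nonneg s_nonneg)
  have G_le: "G n \<le> exp (norm \<beta> * (1 + s)) * (exp (norm \<alpha> * (1 + s)) * s) ^ n" for n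
  proof -
    have "G n \<le> exp (c n) * s ^ n * exp (c n * s)"
      unfolding G_def using power_div_fact_le_exp[OF c_nonneg, of n] s_nonneg
      by (intro mult_right_mono) auto
    also have "\<dots> = exp (norm \<beta> * (1 + s)) * (exp (norm \<alpha> * (1 + s)) * s) ^ n"
      by (simp add: c_def power_mult_distrib algebra_simps flip: exp_add exp_of_nat_mult)
    finally show ?thesis .
  qed
  have "exp (norm \<alpha> * (1 + s)) * s < 1"
    using assms by (simp add: s_def mult.commute)
  then have "summable (\<lambda>n. exp (norm \<beta> * (1 + s)) * (exp (norm \<alpha> * (1 + s)) * s) ^ n)"
    using s_nonneg by (intro summable_mult summable_geometric) simp
  then have "summable G"
    by (rule summable_comparison_test'[where N=0]) (simp add: G_nonneg G_le)
  then have "G summable_on UNIV"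
    by (simp add: summable_on_UNIV_nonneg_real_iff G_nonneg)
  then have "g summable_on UNIV"
    unfolding UNIV_Times_UNIV[symmetric]
    by (rule summable_on_SigmaI[OF g_row]) (auto simp: g_def c_nonneg s_nonneg)
  then have "(\<lambda>x. norm (case_prod (lagrange_double_term \<alpha> \<beta> v) x)) summable_on UNIV"
    by (rule Infinite_Sum.abs_summable_on_comparison_test') (auto simp: norm_le)
  then show ?thesis
    by (rule abs_summable_summable)
qed

lemma norm_mult_less_1_of_exp_bound:
  fixes \<alpha> v :: complex
  assumes "norm v * exp (norm \<alpha> * (1 + norm v)) < 1"
  shows "norm (\<alpha> * v) < 1"
proof -
  have "norm \<alpha> \<le> exp (norm \<alpha>)"
    using exp_ge_add_one_self[of "norm \<alpha>"] by linarith
  also have "\<dots> \<le> exp (norm \<alpha> * (1 + norm v))"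
    by (simp add: distrib_left)
  finally have "norm \<alpha> \<le> exp (norm \<alpha> * (1 + norm v))" .
  then have "norm \<alpha> * norm v \<le> exp (norm \<alpha> * (1 + norm v)) * norm v"
    by (rule mult_right_mono) simp
  with assms show ?thesis
    by (simp add: norm_mult mult.commute)
qed

theorem lagrange_exp_series_sums:
  fixes \<alpha> \<beta> v :: complex
  assumes "norm v * exp (norm \<alpha> * (1 + norm v)) < 1"
  shows "(\<lambda>n. (\<alpha> * of_nat n + \<beta>) ^ n / fact n * v ^ n * exp (- (\<alpha> * of_nat n + \<beta>) * v))
           sums (1 / (1 - \<alpha> * v))"
proof -
  obtain S where S: "(case_prod (lagrange_double_term \<alpha> \<beta> v) has_sum S) UNIV"
    using lagrange_double_term_summable_on[OF assms] by (auto simp: summable_on_def)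
  have rows: "(\<lambda>n. (\<alpha> * of_nat n + \<beta>) ^ n / fact n * v ^ n * exp (- (\<alpha> * of_nat n + \<beta>) * v)) sums S"
    using S unfolding UNIV_Times_UNIV[symmetric]
    by (rule has_sum_imp_sums[OF has_sum_SigmaD])
       (simp only: prod.case lagrange_double_term_row_has_sum)
  have reindex: "(case_prod (lagrange_double_term \<alpha> \<beta> v) has_sum S) UNIV
      = ((\<lambda>(N, n). lagrange_double_term \<alpha> \<beta> v n (N - n)) has_sum S) (SIGMA N:UNIV. {..N})"
    by (rule has_sum_reindex_bij_witness[where i="\<lambda>(N, n). (n, N - n)" and j="\<lambda>(n, k). (n + k, n)"])
       auto
  have diagonals: "((\<lambda>N. (\<alpha> * v) ^ N) has_sum S) UNIV"
  proof (rule has_sum_SigmaD[OF S[unfolded reindex]])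
    fix N :: nat
    have "((\<lambda>n. lagrange_double_term \<alpha> \<beta> v n (N - n)) has_sum
            (\<Sum>n\<le>N. lagrange_double_term \<alpha> \<beta> v n (N - n))) {..N}"
      by (rule has_sum_finite) simp
    then show "((\<lambda>n. (\<lambda>(N, n). lagrange_double_term \<alpha> \<beta> v n (N - n)) (N, n)) has_sum (\<alpha> * v) ^ N) {..N}"
      by (simp add: sum_lagrange_double_term_antidiagonal)
  qed
  have "norm (\<alpha> * v) < 1"
    using assms by (rule norm_mult_less_1_of_exp_bound)
  then have "S = 1 / (1 - \<alpha> * v)"
    by (rule sums_unique2[OF has_sum_imp_sums[OF diagonals] geometric_sums])
  with rows show ?thesis
    by simp
qed

lemma sum_powers_root_of_unity:
  fixes \<zeta> :: "'a::field"
  assumes "\<zeta> ^ r = 1"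
  shows "(\<Sum>i<r. \<zeta> ^ i) = (if \<zeta> = 1 then of_nat r else 0)"
  using assms by (simp add: geometric_sum)

lemma J_power: "J r ^ s = exp (2 * of_real pi * \<i> * of_nat s / of_nat r)"
  by (simp add: J_def mult_ac flip: exp_of_nat_mult)

lemma J_power_eq_1_iff:
  assumes "r \<ge> 1"
  shows "J r ^ s = 1 \<longleftrightarrow> r dvd s"
  using complex_root_unity_eq_1[OF assms] by (simp add: J_power)

lemma sum_inverse_J_power_powers:
  assumes "r \<ge> 1"
  shows "(\<Sum>i<r. inverse (J r ^ s) ^ i) = (if r dvd s then of_nat r else 0)"
proof -
  have "J r ^ (s * r) = 1"
    using J_power_eq_1_iff[OF assms] by simp
  then have "inverse (J r ^ s) ^ r = 1"
    by (simp only: power_inverse power_mult inverse_1)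
  then show ?thesis
    by (simp add: sum_powers_root_of_unity J_power_eq_1_iff[OF assms])
qed

lemma dvd_iff_eq_of_less_double:
  fixes s r :: nat
  assumes "0 < s" and "s < 2 * r"
  shows "r dvd s \<longleftrightarrow> s = r"
proof
  assume "r dvd s"
  then obtain q where q: "s = r * q"
    by (elim dvdE)
  with assms have "q \<noteq> 0" and "r * q < r * 2"
    by auto
  then have "q = 1"
    by simp
  with q show "s = r"
    by simp
qed simp

lemma root_of_unity_div_expand:
  fixes \<zeta> \<rho> y :: "'a::field"
  assumes \<zeta>: "\<zeta> ^ r = 1" and "\<rho> \<noteq> 0" and t: "(y / \<rho>) ^ r \<noteq> 1"
  shows "\<zeta> / (\<rho> * \<zeta> - y) = (\<Sum>k<r. (y / \<rho>) ^ k * inverse \<zeta> ^ k) / (\<rho> * (1 - (y / \<rho>) ^ r))"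
proof -
  define q where "q = y / \<rho> * inverse \<zeta>"
  have "\<zeta> \<noteq> 0"
    using \<zeta> t by (cases r) auto
  have "q ^ r = (y / \<rho>) ^ r"
    unfolding q_def power_mult_distrib power_inverse \<zeta> by simp
  then have "q \<noteq> 1"
    using t by auto
  have "(\<Sum>k<r. (y / \<rho>) ^ k * inverse \<zeta> ^ k) = (\<Sum>k<r. q ^ k)"
    unfolding q_def power_mult_distrib ..
  also have "\<dots> = (q ^ r - 1) / (q - 1)"
    using \<open>q \<noteq> 1\<close> by (rule geometric_sum)
  also have "\<dots> = (1 - (y / \<rho>) ^ r) / (1 - q)"
    unfolding \<open>q ^ r = (y / \<rho>) ^ r\<close> by (metis minus_diff_eq minus_divide_divide)
  finally have "(\<Sum>k<r. (y / \<rho>) ^ k * inverse \<zeta> ^ k) = (1 - (y / \<rho>) ^ r) / (1 - q)" .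
  moreover have "1 - (y / \<rho>) ^ r \<noteq> 0" "1 - q \<noteq> 0" "\<rho> * \<zeta> - y \<noteq> 0"
    using t \<open>q \<noteq> 1\<close> \<open>\<zeta> \<noteq> 0\<close> \<open>\<rho> \<noteq> 0\<close> by (auto simp: q_def field_simps)
  ultimately show ?thesis
    using \<open>\<zeta> \<noteq> 0\<close> \<open>\<rho> \<noteq> 0\<close> by (simp add: q_def field_simps)
qed

lemma xit_summand_eq:
  fixes r a i :: nat and y :: complex
  defines "\<rho> \<equiv> complex_of_real (real r powr (-1 / real r))"
  assumes "r \<ge> 1" and t: "(y / \<rho>) ^ r \<noteq> 1"
  shows "1 / of_nat r * J r powi (- (int (a + 1) * int i)) * xi r i y
      = \<i> * of_real (sqrt 2) * of_real (real r powr (-1/2 - 1/real r)) / (of_nat r * (\<rho> * (1 - (y / \<rho>) ^ r)))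
          * (\<Sum>k<r. (y / \<rho>) ^ k * inverse (J r ^ (a + 1 + k)) ^ i)"
proof -
  define K :: complex where "K = \<i> * of_real (sqrt 2) * of_real (real r powr (-1/2 - 1/real r))"
  define t where "t = y / \<rho>"
  have "\<rho> \<noteq> 0"
    using \<open>r \<ge> 1\<close> by (simp add: \<rho>_def)
  have "(J r ^ i) ^ r = 1"
    using J_power_eq_1_iff[OF \<open>r \<ge> 1\<close>] by (simp flip: power_mult)
  then have "J r ^ i / (\<rho> * J r ^ i - y) = (\<Sum>k<r. t ^ k * inverse (J r ^ i) ^ k) / (\<rho> * (1 - t ^ r))"
    unfolding t_def using \<open>\<rho> \<noteq> 0\<close> t by (rule root_of_unity_div_expand)
  moreover have "xi r i y = K * (J r ^ i / (\<rho> * J r ^ i - y))"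
    by (simp add: xi_def K_def \<rho>_def)
  moreover have "J r powi (- (int (a + 1) * int i)) = inverse (J r powi int ((a + 1) * i))"
    by (simp only: of_nat_mult power_int_minus)
  moreover have "J r powi int ((a + 1) * i) = J r ^ ((a + 1) * i)"
    by (rule power_int_of_nat)
  moreover have "inverse (J r ^ ((a + 1) * i)) * inverse (J r ^ i) ^ k = inverse (J r ^ (a + 1 + k)) ^ i"
    for k
  proof -
    have "J r ^ ((a + 1) * i) * (J r ^ i) ^ k = (J r ^ (a + 1 + k)) ^ i"
      by (simp add: algebra_simps flip: power_add power_mult)
    then show ?thesis
      by (metis inverse_mult_distrib power_inverse)
  qed
  ultimately have "1 / of_nat r * J r powi (- (int (a + 1) * int i)) * xi r i y
      = K / (of_nat r * (\<rho> * (1 - t ^ r))) * (\<Sum>k<r. t ^ k * inverse (J r ^ (a + 1 + k)) ^ i)"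
    by (simp add: sum_distrib_left sum_divide_distrib mult_ac)
  then show ?thesis
    by (simp only: K_def t_def)
qed

lemma xit_eq_geometric:
  fixes r a :: nat and y :: complex
  defines "\<rho> \<equiv> complex_of_real (real r powr (-1 / real r))"
  assumes "a < r" and t: "(y / \<rho>) ^ r \<noteq> 1"
  shows "xit r a y = \<i> * of_real (sqrt 2) * of_real (real r powr (-1/2 - 1/real r)) / \<rho>
                       * (y / \<rho>) ^ (r - a - 1) / (1 - (y / \<rho>) ^ r)"
proof -
  define K :: complex where "K = \<i> * of_real (sqrt 2) * of_real (real r powr (-1/2 - 1/real r))"
  define t where "t = y / \<rho>"
  define c where "c = K / (of_nat r * (\<rho> * (1 - t ^ r)))"
  have "r \<ge> 1"
    using \<open>a < r\<close> by simp
  have summand: "1 / of_nat r * J r powi (- (int (a + 1) * int i)) * xi r i y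
      = c * (\<Sum>k<r. t ^ k * inverse (J r ^ (a + 1 + k)) ^ i)" for i
    unfolding c_def K_def t_def \<rho>_def using \<open>r \<ge> 1\<close> t[unfolded \<rho>_def]
    by (rule xit_summand_eq)
  have filter: "t ^ k * (\<Sum>i<r. inverse (J r ^ (a + 1 + k)) ^ i) = (if k = r - a - 1 then t ^ k * of_nat r else 0)"
    if "k < r" for k
  proof -
    have dvd_iff: "r dvd a + 1 + k \<longleftrightarrow> k = r - a - 1"
      using dvd_iff_eq_of_less_double[of "a + 1 + k" r] that \<open>a < r\<close> by auto
    show ?thesis
      unfolding sum_inverse_J_power_powers[OF \<open>r \<ge> 1\<close>] dvd_iff by simp
  qed
  have "xit r a y = c * (\<Sum>i<r. \<Sum>k<r. t ^ k * inverse (J r ^ (a + 1 + k)) ^ i)"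
    unfolding xit_def summand by (simp only: sum_distrib_left)
  also have "\<dots> = c * (\<Sum>k<r. t ^ k * (\<Sum>i<r. inverse (J r ^ (a + 1 + k)) ^ i))"
    by (subst sum.swap) (simp only: sum_distrib_left)
  also have "(\<Sum>k<r. t ^ k * (\<Sum>i<r. inverse (J r ^ (a + 1 + k)) ^ i))
      = (\<Sum>k<r. if k = r - a - 1 then t ^ k * of_nat r else 0)"
    by (intro sum.cong refl) (simp only: lessThan_iff filter)
  also have "\<dots> = t ^ (r - a - 1) * of_nat r"
    using \<open>a < r\<close> by (simp add: sum.delta)
  finally show ?thesis
    using \<open>r \<ge> 1\<close> by (simp add: c_def K_def t_def)
qed

lemma xit_eq:
  fixes r a :: nat and y :: complex
  assumes "a < r" and "of_nat r * y ^ r \<noteq> 1"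
  shows "xit r a y = \<i> * of_real (sqrt 2) * of_real (real r powr (1/2 - real (a + 1) / real r))
                       * y ^ (r - a - 1) / (1 - of_nat r * y ^ r)"
proof -
  define \<rho> where "\<rho> = real r powr (-1 / real r)"
  have "real r > 0" "\<rho> > 0"
    using \<open>a < r\<close> by (auto simp: \<rho>_def)
  have \<rho>_power: "\<rho> ^ n = real r powr (- real n / real r)" for n
    using \<open>real r > 0\<close> by (simp add: \<rho>_def powr_powr flip: powr_realpow)
  have \<rho>_r: "\<rho> ^ r = 1 / real r"
    using \<open>real r > 0\<close> by (simp add: \<rho>_power powr_minus_divide)
  have "real r powr (1/2 - real (a + 1) / real r) * \<rho> ^ (r - a)
      = real r powr (1/2 - real (a + 1) / real r + - real (r - a) / real r)"
    by (simp only: \<rho>_power powr_add)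
  also have "1/2 - real (a + 1) / real r + - real (r - a) / real r = -1/2 - 1/real r"
    using \<open>real r > 0\<close> \<open>a < r\<close> by (simp add: of_nat_diff field_simps)
  finally have coeff: "real r powr (-1/2 - 1/real r) = real r powr (1/2 - real (a + 1) / real r) * \<rho> ^ (r - a)"
    by simp
  have t_r: "(y / of_real \<rho>) ^ r = of_nat r * y ^ r"
    using \<rho>_r by (simp add: power_divide flip: of_real_power)
  have "xit r a y = \<i> * of_real (sqrt 2) * of_real (real r powr (-1/2 - 1/real r)) / of_real \<rho>
                       * (y / of_real \<rho>) ^ (r - a - 1) / (1 - of_nat r * y ^ r)"
    using xit_eq_geometric[of a r y] assms t_r by (simp add: \<rho>_def)
  also have "\<dots> = \<i> * of_real (sqrt 2) * of_real (real r powr (1/2 - real (a + 1) / real r))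
                       * y ^ (r - a - 1) / (1 - of_nat r * y ^ r)"
  proof -
    define P :: complex where "P = of_real (real r powr (1/2 - real (a + 1) / real r))"
    define R :: complex where "R = of_real \<rho>"
    have "R \<noteq> 0"
      using \<open>\<rho> > 0\<close> by (simp add: R_def)
    have "r - a = Suc (r - a - 1)"
      using \<open>a < r\<close> by simp
    then have "complex_of_real (real r powr (-1/2 - 1/real r)) = P * (R * R ^ (r - a - 1))"
      unfolding coeff by (simp add: P_def R_def)
    then show ?thesis
      unfolding R_def[symmetric] P_def[symmetric] using \<open>R \<noteq> 0\<close>
      by (simp add: power_divide field_simps)
  qed
  finally show ?thesis .
qed

lemma exp_of_nat_mult_Ln_minus_power:
  fixes y :: complex
  assumes "y \<noteq> 0"
  shows "exp (of_nat (r * n + m) * (- (y ^ r) + Ln y))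
           = y ^ m * ((y ^ r) ^ n * exp (- (of_nat r * of_nat n + of_nat m) * y ^ r))"
proof -
  have "exp (of_nat (r * n + m) * (- (y ^ r) + Ln y)) = exp (- (y ^ r) + Ln y) ^ (r * n + m)"
    by (rule exp_of_nat_mult)
  also have "exp (- (y ^ r) + Ln y) = exp (- (y ^ r)) * y"
    by (simp only: exp_add exp_Ln[OF assms])
  also have "(exp (- (y ^ r)) * y) ^ (r * n + m) = exp (- (y ^ r)) ^ (r * n + m) * (y ^ m * (y ^ r) ^ n)"
    by (simp add: power_mult_distrib power_add mult.commute flip: power_mult)
  also have "exp (- (y ^ r)) ^ (r * n + m) = exp (of_nat (r * n + m) * - (y ^ r))"
    by (rule exp_of_nat_mult[symmetric])
  finally show ?thesis
    by (simp add: algebra_simps)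
qed

theorem lemma4p5:
  fixes r a :: nat
  assumes "r \<ge> 1" and "a < r"
  shows "\<forall>\<^sub>F y in at (0::complex).
     (\<lambda>n. \<i> * of_real (sqrt 2) * of_real (real r powr (1/2 - real (a+1) / real r))
          * (of_nat (r*n + r - a - 1)) ^ n / fact n
          * exp (of_nat (r*n + r - a - 1) * (- (y ^ r) + Ln y)))
     sums xit r a y"
proof -
  define B :: complex where "B = \<i> * of_real (sqrt 2) * of_real (real r powr (1/2 - real (a+1) / real r))"
  define m where "m = r - a - 1"
  have N: "r * n + r - a - 1 = r * n + m" for n
    using \<open>a < r\<close> by (simp add: m_def)
  have sums: "(\<lambda>n. B * (of_nat (r*n + r - a - 1)) ^ n / fact n
          * exp (of_nat (r*n + r - a - 1) * (- (y ^ r) + Ln y))) sums xit r a y"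
    if "y \<noteq> 0" and small: "norm (y ^ r) * exp (real r * (1 + norm (y ^ r))) < 1" for y
  proof -
    have "norm (of_nat r * y ^ r) < 1"
      using small by (intro norm_mult_less_1_of_exp_bound) simp
    then have "of_nat r * y ^ r \<noteq> 1"
      by auto
    have "(\<lambda>n. (of_nat r * of_nat n + of_nat m) ^ n / fact n * (y ^ r) ^ n
              * exp (- (of_nat r * of_nat n + of_nat m) * y ^ r)) sums (1 / (1 - of_nat r * y ^ r))"
      using small by (intro lagrange_exp_series_sums) simp
    moreover have "xit r a y = B * y ^ m * (1 / (1 - of_nat r * y ^ r))"
      using xit_eq[OF \<open>a < r\<close> \<open>of_nat r * y ^ r \<noteq> 1\<close>] by (simp add: B_def m_def)
    ultimately show ?thesis
      unfolding N exp_of_nat_mult_Ln_minus_power[OF \<open>y \<noteq> 0\<close>]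
      by (auto dest: sums_mult[where c="B * y ^ m"] simp: mult_ac)
  qed
  have "((\<lambda>y::complex. norm (y ^ r) * exp (real r * (1 + norm (y ^ r)))) \<longlongrightarrow> 0) (at 0)"
    using \<open>r \<ge> 1\<close> by (auto intro!: tendsto_eq_intros)
  then have "\<forall>\<^sub>F y in at (0::complex). norm (y ^ r) * exp (real r * (1 + norm (y ^ r))) < 1"
    by (rule order_tendstoD(2)) simp
  with eventually_neq_at_within[of 0 0 UNIV] show ?thesis
    by eventually_elim (use sums in \<open>simp add: B_def\<close>)
qed

end
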